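(* In a star-shaped zero-sum network game with center player $1$ (i.e. $r_{i,j}=0$ whenever $i\neq1$ and $j\neq1$), the Nash equilibrium value of the center player is unique: for any two Nash equilibria $\pi,\pi'$ of the game, $r_1(\pi)=r_1(\pi')$.
   Context: Players $\mathcal N=[n]$ with finite action sets $\mathcal A_i$ and pairwise matrices $r_{1,i}\in\mathbb R^{|\mathcal A_1|\times|\mathcal A_i|}$, $r_{i,1}\in\mathbb R^{|\mathcal A_i|\times|\mathcal A_1|}$; for a product policy $\pi$, $r_1(\pi)=\sum_{i\neq1}\pi_1^\top r_{1,i}\pi_i$ and $r_i(\pi)=\pi_i^\top r_{i,1}\pi_1$ for $i\neq1$. Zero-sum means $\sum_ir_i(\pi)=0$ for every product policy. A Nash equilibrium is a product policy $\pi$ with $r_i(\mu_i,\pi_{-i})\le r_i(\pi)$ for all $i$ and $\mu_i\in\Delta(\mathcal A_i)$. *)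

theory Defs
  imports Complex_Main
begin

text \<open>Each player i has a finite action set A i (all actions live in
one ambient type 'a). A mixed strategy of player i is a function p :: 'a => real that is a
probability distribution on A i (values outside A i are irrelevant).  The star-shaped game is given by the
matrices R1 i (= r_{1,i}, indexed by actions of player 1 and of player i) and Ri1 i
(= r_{i,1}).\<close>

definition is_dist :: "'a set \<Rightarrow> ('a \<Rightarrow> real) \<Rightarrow> bool" where
  "is_dist S p \<longleftrightarrow> (\<forall>a\<in>S. 0 \<le> p a) \<and> (\<Sum>a\<in>S. p a) = 1"

definition is_policy :: "nat \<Rightarrow> (nat \<Rightarrow> 'a set) \<Rightarrow> (nat \<Rightarrow> 'a \<Rightarrow> real) \<Rightarrow> bool" where
  "is_policy n A pol \<longleftrightarrow> (\<forall>i\<in>{1..n}. is_dist (A i) (pol i))"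

definition bilin :: "'a set \<Rightarrow> 'a set \<Rightarrow> ('a \<Rightarrow> 'a \<Rightarrow> real) \<Rightarrow> ('a \<Rightarrow> real) \<Rightarrow> ('a \<Rightarrow> real) \<Rightarrow> real" where
  "bilin S T M p q = (\<Sum>a\<in>S. \<Sum>b\<in>T. p a * M a b * q b)"

definition payoff :: "nat \<Rightarrow> (nat \<Rightarrow> 'a set) \<Rightarrow> (nat \<Rightarrow> 'a \<Rightarrow> 'a \<Rightarrow> real) \<Rightarrow>
    (nat \<Rightarrow> 'a \<Rightarrow> 'a \<Rightarrow> real) \<Rightarrow> nat \<Rightarrow> (nat \<Rightarrow> 'a \<Rightarrow> real) \<Rightarrow> real" where
  "payoff n A R1 Ri1 i pol =
     (if i = 1 then (\<Sum>j\<in>{2..n}. bilin (A 1) (A j) (R1 j) (pol 1) (pol j))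
      else bilin (A i) (A 1) (Ri1 i) (pol i) (pol 1))"

definition zero_sum :: "nat \<Rightarrow> (nat \<Rightarrow> 'a set) \<Rightarrow> (nat \<Rightarrow> 'a \<Rightarrow> 'a \<Rightarrow> real) \<Rightarrow>
    (nat \<Rightarrow> 'a \<Rightarrow> 'a \<Rightarrow> real) \<Rightarrow> bool" where
  "zero_sum n A R1 Ri1 \<longleftrightarrow>
     (\<forall>pol. is_policy n A pol \<longrightarrow> (\<Sum>i\<in>{1..n}. payoff n A R1 Ri1 i pol) = 0)"

definition is_nash :: "nat \<Rightarrow> (nat \<Rightarrow> 'a set) \<Rightarrow> (nat \<Rightarrow> 'a \<Rightarrow> 'a \<Rightarrow> real) \<Rightarrow>
    (nat \<Rightarrow> 'a \<Rightarrow> 'a \<Rightarrow> real) \<Rightarrow> (nat \<Rightarrow> 'a \<Rightarrow> real) \<Rightarrow> bool" where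
  "is_nash n A R1 Ri1 pol \<longleftrightarrow> is_policy n A pol \<and>
     (\<forall>i\<in>{1..n}. \<forall>mu. is_dist (A i) mu \<longrightarrow>
        payoff n A R1 Ri1 i (pol(i := mu)) \<le> payoff n A R1 Ri1 i pol)"

end

theory Submission
  imports Defs
begin

text \<open>Write v(p, q) for the center's payoff when the center plays p 1 and every leaf j plays q j.
  At a Nash equilibrium \<pi> the center cannot gain by deviating, so v(\<sigma>, \<pi>) \<le> v(\<pi>, \<pi>) for every
  policy \<sigma>. By zero-sum the leaves jointly receive -v, and each leaf's payoff depends only on its
  own strategy and the center's, so a joint deviation of the leaves is a sum of unilateral ones
  and cannot help them either: v(\<pi>, \<pi>) \<le> v(\<pi>, \<sigma>). Thus every equilibrium is a saddle point of v,
  and for two equilibria the chain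
  v(\<pi>, \<pi>) \<le> v(\<pi>, \<pi>') \<le> v(\<pi>', \<pi>') \<le> v(\<pi>', \<pi>) \<le> v(\<pi>, \<pi>) closes.\<close>

lemma payoff_leaf_cong:
  assumes "i \<noteq> 1" and "pol i = pol' i" and "pol 1 = pol' 1"
  shows "payoff n A R1 Ri1 i pol = payoff n A R1 Ri1 i pol'"
  using assms by (simp add: payoff_def)

lemma is_policy_update_from:
  assumes "is_policy n A pol" and "is_policy n A sigma"
  shows "is_policy n A (sigma(i := pol i))"
  using assms by (simp add: is_policy_def)

lemma zero_sum_center_payoff:
  assumes "zero_sum n A R1 Ri1" and "is_policy n A pol"
  shows "payoff n A R1 Ri1 1 pol = - (\<Sum>j\<in>{2..n}. payoff n A R1 Ri1 j pol)"
proof (cases "n = 0")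
  case True
  then show ?thesis by (simp add: payoff_def)
next
  case False
  then have "{1..n} = insert 1 {2..n}" by auto
  then have "(\<Sum>i\<in>{1..n}. payoff n A R1 Ri1 i pol)
      = payoff n A R1 Ri1 1 pol + (\<Sum>j\<in>{2..n}. payoff n A R1 Ri1 j pol)"
    by simp
  with assms show ?thesis by (simp add: zero_sum_def)
qed

lemma nash_center_deviation_le:
  assumes "is_nash n A R1 Ri1 pol" and "is_policy n A sigma"
  shows "payoff n A R1 Ri1 1 (pol(1 := sigma 1)) \<le> payoff n A R1 Ri1 1 pol"
proof (cases "n = 0")
  case True
  then show ?thesis by (simp add: payoff_def)
next
  case False
  then have "is_dist (A 1) (sigma 1)"
    using assms(2) by (simp add: is_policy_def)
  with False assms(1) show ?thesis by (simp add: is_nash_def)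
qed

lemma nash_leaves_deviation_ge:
  assumes "zero_sum n A R1 Ri1" and "is_nash n A R1 Ri1 pol" and "is_policy n A sigma"
  shows "payoff n A R1 Ri1 1 pol \<le> payoff n A R1 Ri1 1 (sigma(1 := pol 1))"
proof -
  have leaf_le: "payoff n A R1 Ri1 j (sigma(1 := pol 1)) \<le> payoff n A R1 Ri1 j pol"
    if j: "j \<in> {2..n}" for j
  proof -
    have "payoff n A R1 Ri1 j (sigma(1 := pol 1)) = payoff n A R1 Ri1 j (pol(j := sigma j))"
      using j by (intro payoff_leaf_cong) auto
    also have "\<dots> \<le> payoff n A R1 Ri1 j pol"
      using assms(2,3) j by (auto simp: is_nash_def is_policy_def)
    finally show ?thesis .
  qed
  have pol_policy: "is_policy n A pol"
    using assms(2) by (simp add: is_nash_def)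
  then have spliced: "is_policy n A (sigma(1 := pol 1))"
    using assms(3) by (rule is_policy_update_from)
  have "payoff n A R1 Ri1 1 pol = - (\<Sum>j\<in>{2..n}. payoff n A R1 Ri1 j pol)"
    using assms(1) pol_policy by (rule zero_sum_center_payoff)
  also have "\<dots> \<le> - (\<Sum>j\<in>{2..n}. payoff n A R1 Ri1 j (sigma(1 := pol 1)))"
    using leaf_le by (simp only: neg_le_iff_le sum_mono)
  also have "\<dots> = payoff n A R1 Ri1 1 (sigma(1 := pol 1))"
    using zero_sum_center_payoff[OF assms(1) spliced] by simp
  finally show ?thesis .
qed

theorem proposition9:
  fixes n :: nat and A :: "nat \<Rightarrow> 'a set"
    and R1 Ri1 :: "nat \<Rightarrow> 'a \<Rightarrow> 'a \<Rightarrow> real"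
    and pol pol' :: "nat \<Rightarrow> 'a \<Rightarrow> real"
  assumes "\<forall>i\<in>{1..n}. finite (A i)"
    and "zero_sum n A R1 Ri1"
    and "is_nash n A R1 Ri1 pol"
    and "is_nash n A R1 Ri1 pol'"
  shows "payoff n A R1 Ri1 1 pol = payoff n A R1 Ri1 1 pol'"
proof -
  have policies: "is_policy n A pol" "is_policy n A pol'"
    using assms(3,4) by (simp_all add: is_nash_def)
  have "payoff n A R1 Ri1 1 pol \<le> payoff n A R1 Ri1 1 (pol'(1 := pol 1))"
    using assms(2,3) policies(2) by (rule nash_leaves_deviation_ge)
  also have "\<dots> \<le> payoff n A R1 Ri1 1 pol'"
    using assms(4) policies(1) by (rule nash_center_deviation_le)
  finally have le: "payoff n A R1 Ri1 1 pol \<le> payoff n A R1 Ri1 1 pol'" .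
  have "payoff n A R1 Ri1 1 pol' \<le> payoff n A R1 Ri1 1 (pol(1 := pol' 1))"
    using assms(2,4) policies(1) by (rule nash_leaves_deviation_ge)
  also have "\<dots> \<le> payoff n A R1 Ri1 1 pol"
    using assms(3) policies(2) by (rule nash_center_deviation_le)
  finally show ?thesis using le by simp
qed

end
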